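(* Let $n\geq 3$ and, for $1\leq i\leq\lfloor n/2\rfloor$, let $G_i$ be the graph obtained from $K_n$ by deleting $i$ pairwise disjoint edges (equivalently, by successively deleting $i$ edges each joining two saturated vertices). Let $g:A\to B$ be a constant function with value $w\in B$, and let $F_{G_i}$ be the corresponding functigraph of $G_i$. Then: (i) if $1\leq i\leq\lfloor n/2\rfloor-1$, then $fix(F_{G_i})=2n-2i-3$; (ii) if $n$ is even and $i=n/2$, then $fix(F_{G_i})=n-1$; (iii) if $n$ is odd and $i=\lfloor n/2\rfloor$, then $fix(F_{G_i})=2\lfloor n/2\rfloor$ when $w$ is the unique saturated vertex of $G_2$ (the copy of $G_i$ on $B$), and $fix(F_{G_i})=2\lfloor n/2\rfloor-1$ otherwise.
   Context: A vertex of a graph is saturated if it is adjacent to all other vertices. A set $S\subseteq V(H)$ is a fixing set of a graph $H$ if the only automorphism of $H$ fixing every vertex of $S$ is the identity; $fix(H)$ is the minimum cardinality of a fixing set of $H$. Functigraph: let $G_1,G_2$ be disjoint copies of a connected graph $G$, with $A=V(G_1)$, $B=V(G_2)$, and let $g:A\to B$ be a function. The functigraph $F_G$ has vertex set $A\cup B$ and edge set $E(G_1)\cup E(G_2)\cup\{ug(u):u\in A\}$. *)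

theory Defs
  imports Main
begin

text \<open>A graph is given by a finite vertex set V and a symmetric irreflexive
adjacency relation E (only its restriction to V matters).\<close>

definition saturated :: "'a set \<Rightarrow> ('a \<Rightarrow> 'a \<Rightarrow> bool) \<Rightarrow> 'a \<Rightarrow> bool" where
  "saturated V E v \<longleftrightarrow> v \<in> V \<and> (\<forall>u\<in>V. u \<noteq> v \<longrightarrow> E v u)"

definition is_aut :: "'a set \<Rightarrow> ('a \<Rightarrow> 'a \<Rightarrow> bool) \<Rightarrow> ('a \<Rightarrow> 'a) \<Rightarrow> bool" where
  "is_aut V E f \<longleftrightarrow> bij_betw f V V \<and> (\<forall>u\<in>V. \<forall>v\<in>V. E u v \<longleftrightarrow> E (f u) (f v))"

definition fixing_set :: "'a set \<Rightarrow> ('a \<Rightarrow> 'a \<Rightarrow> bool) \<Rightarrow> 'a set \<Rightarrow> bool" where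
  "fixing_set V E S \<longleftrightarrow> S \<subseteq> V \<and>
     (\<forall>f. is_aut V E f \<and> (\<forall>s\<in>S. f s = s) \<longrightarrow> (\<forall>v\<in>V. f v = v))"

definition fix_num :: "'a set \<Rightarrow> ('a \<Rightarrow> 'a \<Rightarrow> bool) \<Rightarrow> nat" where
  "fix_num V E = (LEAST k. \<exists>S. fixing_set V E S \<and> card S = k)"

text \<open>Functigraph: A = Inl ` V (copy G1), B = Inr ` V (copy G2), g : V \<Rightarrow> V
  encodes the function A \<rightarrow> B via Inl u \<mapsto> Inr (g u).\<close>

definition functigraph_V :: "'a set \<Rightarrow> ('a + 'a) set" where
  "functigraph_V V = Inl ` V \<union> Inr ` V"

fun functigraph_E :: "('a \<Rightarrow> 'a \<Rightarrow> bool) \<Rightarrow> ('a \<Rightarrow> 'a) \<Rightarrow> ('a + 'a) \<Rightarrow> ('a + 'a) \<Rightarrow> bool" where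
  "functigraph_E E g (Inl u) (Inl v) = E u v"
| "functigraph_E E g (Inr u) (Inr v) = E u v"
| "functigraph_E E g (Inl u) (Inr v) = (v = g u)"
| "functigraph_E E g (Inr v) (Inl u) = (v = g u)"

text \<open>K_n on {0..<n} minus a set M of edges.\<close>

definition Kn_minus :: "nat set set \<Rightarrow> nat \<Rightarrow> nat \<Rightarrow> bool" where
  "Kn_minus M u v \<longleftrightarrow> u \<noteq> v \<and> {u, v} \<notin> M"

definition matching_in_Kn :: "nat \<Rightarrow> nat set set \<Rightarrow> bool" where
  "matching_in_Kn n M \<longleftrightarrow> (\<forall>e\<in>M. e \<subseteq> {0..<n} \<and> card e = 2) \<and>
     (\<forall>e\<in>M. \<forall>e'\<in>M. e \<noteq> e' \<longrightarrow> e \<inter> e' = {})"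

end

theory Submission
  imports Defs "HOL-Combinatorics.Transposition"
begin

text \<open>
  Write \<open>G = K\<^sub>n - M\<close>, \<open>F\<close> for its functigraph with constant value \<open>w\<close>, and call
  the vertices outside \<open>\<Union>M\<close> saturated. The vertex \<open>Inr w\<close> is the only vertex of \<open>F\<close>
  of degree greater than \<open>n\<close>, so every automorphism fixes it; since \<open>G\<close> has diameter at
  most 2, an automorphism cannot move any vertex of the first copy into the second one. Hence the
  automorphisms of \<open>F\<close> are exactly the pairs \<open>(\<phi>, \<psi>)\<close> of automorphisms of \<open>G\<close> with
  \<open>\<psi> w = w\<close>, acting on the two copies.

  In \<open>G\<close> the two ends of a deleted edge are twins, as are any two saturated vertices, so a fixing
  set must meet every deleted edge and contain all saturated vertices but one; conversely every
  such set fixes \<open>G\<close>. On the second copy the same holds for the edges avoiding \<open>w\<close> and the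
  saturated vertices other than \<open>w\<close>, as \<open>w\<close> is fixed anyway. Hence
  \<open>fix(F) = (|M| + s - 1) + (|M\<^sub>w| + s\<^sub>w - 1)\<close> with truncated subtraction, which with
  \<open>|M| = i\<close> and \<open>s = n - 2i\<close> gives the three cases.
\<close>

section \<open>Automorphisms, twins and fixing sets\<close>

definition twins :: "'a set \<Rightarrow> ('a \<Rightarrow> 'a \<Rightarrow> bool) \<Rightarrow> 'a \<Rightarrow> 'a \<Rightarrow> bool" where
  "twins V E a b \<longleftrightarrow> (\<forall>x\<in>V. x \<noteq> a \<longrightarrow> x \<noteq> b \<longrightarrow> E a x = E b x)"

definition neighbours :: "'a set \<Rightarrow> ('a \<Rightarrow> 'a \<Rightarrow> bool) \<Rightarrow> 'a \<Rightarrow> 'a set" where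
  "neighbours V E x = {y \<in> V. E x y}"

lemma is_aut_transpose_twins:
  assumes "a \<in> V" "b \<in> V" "twins V E a b"
    and sym: "\<And>x y. E x y = E y x" and irrefl: "\<And>x. \<not> E x x"
  shows "is_aut V E (transpose a b)"
  unfolding is_aut_def
proof (intro conjI ballI)
  show "bij_betw (transpose a b) V V" using assms(1,2) by simp
  fix u v assume "u \<in> V" "v \<in> V"
  have "E x y \<longleftrightarrow> E (transpose a b x) y" if "x \<in> V" "y \<in> V" "y \<noteq> a" "y \<noteq> b" for x y
    using assms(3) that unfolding twins_def transpose_def by auto
  then show "E u v \<longleftrightarrow> E (transpose a b u) (transpose a b v)"
    using \<open>u \<in> V\<close> \<open>v \<in> V\<close> sym irrefl unfolding transpose_def by (smt (verit))
qed

lemma fixing_set_twins: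
  assumes "fixing_set V E S" "a \<in> V" "b \<in> V" "a \<noteq> b" "twins V E a b"
    and "\<And>x y. E x y = E y x" "\<And>x. \<not> E x x"
  shows "a \<in> S \<or> b \<in> S"
proof (rule ccontr)
  assume "\<not> (a \<in> S \<or> b \<in> S)"
  then have "\<forall>s\<in>S. transpose a b s = s" by (auto simp: transpose_def)
  with assms is_aut_transpose_twins[of a V b E] have "\<forall>v\<in>V. transpose a b v = v"
    unfolding fixing_set_def by blast
  with assms(2,4) show False by auto
qed

lemma is_aut_inj_on: "is_aut V E f \<Longrightarrow> inj_on f V"
  unfolding is_aut_def by (blast intro: bij_betw_imp_inj_on)

lemma is_aut_in: "is_aut V E f \<Longrightarrow> x \<in> V \<Longrightarrow> f x \<in> V"
  unfolding is_aut_def using bij_betwE by blast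

lemma neighbours_is_aut:
  assumes f: "is_aut V E f" and x: "x \<in> V"
  shows "neighbours V E (f x) = f ` neighbours V E x"
proof -
  have "f ` V = V" and adj: "\<forall>u\<in>V. \<forall>v\<in>V. E u v \<longleftrightarrow> E (f u) (f v)"
    using f unfolding is_aut_def bij_betw_def by auto
  have "{y \<in> f ` V. E (f x) y} = f ` {y \<in> V. E x y}"
    using x adj by blast
  with \<open>f ` V = V\<close> show ?thesis unfolding neighbours_def by simp
qed

lemma card_neighbours_is_aut:
  assumes "is_aut V E f" "x \<in> V"
  shows "card (neighbours V E (f x)) = card (neighbours V E x)"
  unfolding neighbours_is_aut[OF assms]
  by (rule card_image, rule inj_on_subset[OF is_aut_inj_on[OF assms(1)]]) (auto simp: neighbours_def)

lemma is_aut_induced: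
  assumes f: "is_aut W F f" and "finite V"
    and h: "inj_on h V" "h ` V \<subseteq> W" and adj: "\<And>u v. u \<in> V \<Longrightarrow> v \<in> V \<Longrightarrow> F (h u) (h v) = E u v"
    and \<phi>: "\<And>u. u \<in> V \<Longrightarrow> \<phi> u \<in> V \<and> f (h u) = h (\<phi> u)"
  shows "is_aut V E \<phi>"
  unfolding is_aut_def
proof (intro conjI ballI)
  have "inj_on \<phi> V"
  proof (rule inj_onI)
    fix u v assume uv: "u \<in> V" "v \<in> V" "\<phi> u = \<phi> v"
    then have "f (h u) = f (h v)" using \<phi> by metis
    then have "h u = h v" using inj_onD[OF is_aut_inj_on[OF f]] h(2) uv(1,2) by blast
    then show "u = v" using inj_onD[OF h(1)] uv(1,2) by blast
  qed
  moreover have "\<phi> ` V = V" using endo_inj_surj[OF \<open>finite V\<close> _ \<open>inj_on \<phi> V\<close>] \<phi> by blast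
  ultimately show "bij_betw \<phi> V V" by (simp add: bij_betw_def)
  fix u v assume "u \<in> V" "v \<in> V"
  then have "h u \<in> W" "h v \<in> W" using h(2) by auto
  then have "E u v = F (f (h u)) (f (h v))"
    using f adj[OF \<open>u \<in> V\<close> \<open>v \<in> V\<close>] unfolding is_aut_def by simp
  also have "\<dots> = E (\<phi> u) (\<phi> v)" using \<phi> adj \<open>u \<in> V\<close> \<open>v \<in> V\<close> by simp
  finally show "E u v \<longleftrightarrow> E (\<phi> u) (\<phi> v)" .
qed

lemma is_aut_fixing_avoids:
  assumes "is_aut V E f" "\<forall>r\<in>R. f r = r" "R \<subseteq> V" "x \<in> V" "x \<notin> R"
  shows "f x \<notin> R"
proof
  assume "f x \<in> R"
  then have "f (f x) = f x" using assms(2) by blast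
  then have "f x = x"
    using inj_onD[OF is_aut_inj_on[OF assms(1)]] assms(3,4) \<open>f x \<in> R\<close> by blast
  with assms(5) \<open>f x \<in> R\<close> show False by simp
qed

section \<open>Transversals of disjoint families\<close>

lemma inj_on_choice_disjoint:
  assumes "pairwise disjnt N" "\<And>e. e \<in> N \<Longrightarrow> c e \<in> e"
  shows "inj_on c N"
proof (rule inj_onI)
  fix e e' assume "e \<in> N" "e' \<in> N" "c e = c e'"
  then have "\<not> disjnt e e'" using assms(2) by (metis disjnt_iff)
  with \<open>e \<in> N\<close> \<open>e' \<in> N\<close> assms(1) show "e = e'" by (meson pairwiseD)
qed

lemma card_le_card_Int_Union:
  assumes "finite X" "pairwise disjnt N" "\<forall>e\<in>N. e \<inter> X \<noteq> {}"
  shows "card N \<le> card (X \<inter> \<Union>N)"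
proof -
  define c where "c e = (SOME x. x \<in> e \<inter> X)" for e
  have c: "c e \<in> e \<inter> X" if "e \<in> N" for e
    unfolding c_def using assms(3) that by (metis ex_in_conv someI_ex)
  have "inj_on c N" using inj_on_choice_disjoint[OF assms(2)] c by blast
  then have "card N = card (c ` N)" by (simp add: card_image)
  also have "\<dots> \<le> card (X \<inter> \<Union>N)"
    using assms(1) c by (intro card_mono) blast+
  finally show ?thesis .
qed

lemma card_transversal_lower_bound:
  assumes "finite X" "pairwise disjnt N" "\<forall>e\<in>N. e \<inter> X \<noteq> {}"
    and "finite Q" "Q \<inter> \<Union>N = {}" "\<forall>x\<in>Q - X. \<forall>y\<in>Q - X. x = y"
  shows "card N + (card Q - 1) \<le> card X"
proof -
  have "card (Q - X) \<le> 1"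
    using assms(6) by (simp add: card_le_Suc0_iff_eq assms(4))
  moreover have "card Q = card (Q \<inter> X) + card (Q - X)"
    using card_Int_Diff[OF assms(4)] by simp
  ultimately have "card Q - 1 \<le> card (X \<inter> Q)" by (simp add: Int_commute)
  moreover have "card (X \<inter> \<Union>N) + card (X \<inter> Q) = card (X \<inter> \<Union>N \<union> X \<inter> Q)"
    using assms(1,5) by (intro card_Un_disjoint[symmetric]) auto
  moreover have "card (X \<inter> \<Union>N \<union> X \<inter> Q) \<le> card X"
    using assms(1) by (intro card_mono) auto
  ultimately show ?thesis
    using card_le_card_Int_Union[OF assms(1-3)] by linarith
qed

lemma transversal_exists:
  assumes "finite N" "pairwise disjnt N" "{} \<notin> N" "finite Q" "Q \<inter> \<Union>N = {}"
  obtains R where "R \<subseteq> \<Union>N \<union> Q" "card R = card N + (card Q - 1)"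
    "\<forall>e\<in>N. e \<inter> R \<noteq> {}" "\<forall>x\<in>Q - R. \<forall>y\<in>Q - R. x = y"
proof -
  define c :: "'a set \<Rightarrow> 'a" where "c e = (SOME x. x \<in> e)" for e
  have c: "c e \<in> e" if "e \<in> N" for e
    unfolding c_def using assms(3) that by (metis ex_in_conv someI_ex)
  have "inj_on c N" by (rule inj_on_choice_disjoint[OF assms(2) c])
  then have card_c: "card (c ` N) = card N" by (rule card_image)
  obtain Q' where Q': "Q' \<subseteq> Q" "card Q' = card Q - 1" "\<forall>x\<in>Q - Q'. \<forall>y\<in>Q - Q'. x = y"
  proof (cases "Q = {}")
    case False
    then obtain q where "q \<in> Q" by blast
    then show ?thesis using that[of "Q - {q}"] assms(4) by auto
  qed (use that in simp)
  have "card (c ` N \<union> Q') = card (c ` N) + card Q'"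
    using assms(1,4,5) c Q'(1) by (intro card_Un_disjoint) (auto dest: finite_subset)
  moreover have "\<forall>e\<in>N. e \<inter> (c ` N \<union> Q') \<noteq> {}" using c by blast
  ultimately show ?thesis
    using c Q' by (intro that[of "c ` N \<union> Q'"]) (auto simp: card_c)
qed

section \<open>Complete graphs minus a matching\<close>

lemma matching_in_Kn_edge:
  assumes "matching_in_Kn n M" "e \<in> M"
  obtains a b where "e = {a, b}" "a \<noteq> b" "a < n" "b < n"
proof -
  have "e \<subseteq> {0..<n}" "card e = 2" using assms unfolding matching_in_Kn_def by auto
  then show ?thesis using that by (auto simp: card_2_iff)
qed

lemma matching_in_Kn_unique:
  assumes "matching_in_Kn n M" "e \<in> M" "e' \<in> M" "x \<in> e" "x \<in> e'"
  shows "e = e'"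
  using assms unfolding matching_in_Kn_def by blast

lemma matching_in_Kn_disjoint: "matching_in_Kn n M \<Longrightarrow> pairwise disjnt M"
  unfolding matching_in_Kn_def pairwise_def disjnt_def by blast

lemma Union_matching_in_Kn_subset: "matching_in_Kn n M \<Longrightarrow> \<Union>M \<subseteq> {0..<n}"
  unfolding matching_in_Kn_def by blast

lemma matching_in_Kn_finite: "matching_in_Kn n M \<Longrightarrow> finite M"
  by (rule finite_subset[of _ "Pow {0..<n}"]) (auto dest: Union_matching_in_Kn_subset)

lemma card_Union_matching_in_Kn:
  assumes "matching_in_Kn n M" shows "card (\<Union>M) = 2 * card M"
proof -
  have "card (\<Union>M) = sum card M"
    using assms matching_in_Kn_finite[OF assms]
    by (intro card_Union_disjoint)
       (auto simp: matching_in_Kn_def pairwise_def disjnt_def intro: card_ge_0_finite)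
  also have "\<dots> = 2 * card M" using assms by (simp add: matching_in_Kn_def)
  finally show ?thesis .
qed

lemma card_unmatched:
  assumes "matching_in_Kn n M" shows "card ({0..<n} - \<Union>M) = n - 2 * card M"
proof -
  have "finite (\<Union>M)" using Union_matching_in_Kn_subset[OF assms] by (rule finite_subset) simp
  then show ?thesis
    using card_Diff_subset[OF _ Union_matching_in_Kn_subset[OF assms]] card_Union_matching_in_Kn[OF assms]
    by simp
qed

lemma card_matching_avoiding:
  assumes "matching_in_Kn n M"
  shows "card {e \<in> M. x \<notin> e} = (if x \<in> \<Union>M then card M - 1 else card M)"
proof (cases "x \<in> \<Union>M")
  case True
  then obtain e where e: "e \<in> M" "x \<in> e" by blast
  then have "{e \<in> M. x \<notin> e} = M - {e}"
    using matching_in_Kn_unique[OF assms _ e(1) _ e(2)] by blast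
  with True e(1) show ?thesis using matching_in_Kn_finite[OF assms] by simp
next
  case False
  then have "{e \<in> M. x \<notin> e} = M" by blast
  with False show ?thesis by simp
qed

lemma Kn_minus_sym: "Kn_minus M x y = Kn_minus M y x"
  by (auto simp: Kn_minus_def insert_commute)

lemma Kn_minus_irrefl: "\<not> Kn_minus M x x"
  by (simp add: Kn_minus_def)

lemma Kn_minus_unmatched: "x \<notin> \<Union>M \<Longrightarrow> Kn_minus M x y \<longleftrightarrow> x \<noteq> y"
  unfolding Kn_minus_def by auto

lemma Kn_minus_matched:
  assumes "matching_in_Kn n M" "{a, b} \<in> M" "x \<noteq> a" "x \<noteq> b"
  shows "Kn_minus M a x"
proof -
  have "{a, x} \<notin> M"
  proof
    assume "{a, x} \<in> M"
    then have "{a, x} = {a, b}" using matching_in_Kn_unique[OF assms(1) _ assms(2)] by blast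
    with assms(3,4) show False by (metis doubleton_eq_iff)
  qed
  with assms(3) show ?thesis unfolding Kn_minus_def by auto
qed

lemma twins_Kn_minus_matched:
  assumes "matching_in_Kn n M" "{a, b} \<in> M"
  shows "twins V (Kn_minus M) a b"
  using Kn_minus_matched[OF assms] Kn_minus_matched[OF assms(1), of b a] assms(2)
  unfolding twins_def by (simp add: insert_commute)

lemma twins_Kn_minus_unmatched:
  "a \<notin> \<Union>M \<Longrightarrow> b \<notin> \<Union>M \<Longrightarrow> twins V (Kn_minus M) a b"
  unfolding twins_def by (simp add: Kn_minus_unmatched)

lemma saturated_Kn_minus_iff:
  assumes "matching_in_Kn n M" "w < n"
  shows "saturated {0..<n} (Kn_minus M) w \<longleftrightarrow> w \<notin> \<Union>M"
proof
  assume sat: "saturated {0..<n} (Kn_minus M) w"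
  show "w \<notin> \<Union>M"
  proof
    assume "w \<in> \<Union>M"
    then obtain e where "e \<in> M" "w \<in> e" by blast
    then obtain a b where ab: "e = {a, b}" "a \<noteq> b" "a < n" "b < n"
      using matching_in_Kn_edge[OF assms(1)] by blast
    define u where "u = (if w = a then b else a)"
    have "e = {w, u}" "u \<noteq> w" "u < n"
      using ab \<open>w \<in> e\<close> unfolding u_def by auto
    with sat \<open>e \<in> M\<close> show False unfolding saturated_def Kn_minus_def by auto
  qed
qed (use assms Kn_minus_unmatched in \<open>auto simp: saturated_def\<close>)

lemma Kn_minus_path2:
  assumes "matching_in_Kn n M" "3 \<le> n" "u < n" "v < n" "u \<noteq> v"
  obtains "Kn_minus M u v" | t where "t < n" "Kn_minus M u t" "Kn_minus M t v"
proof (cases "{u, v} \<in> M")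
  case True
  have "card {u, v} < card {0..<n}"
    using assms(2,5) by simp
  then have "\<not> {0..<n} \<subseteq> {u, v}"
    by (meson card_mono finite.emptyI finite.insertI not_le)
  then obtain t where t: "t < n" "t \<noteq> u" "t \<noteq> v" by (auto simp: subset_iff)
  have "{v, u} \<in> M" using True by (simp add: insert_commute)
  have "Kn_minus M u t" using Kn_minus_matched[OF assms(1) True] t by simp
  moreover have "Kn_minus M t v"
    using Kn_minus_matched[OF assms(1) \<open>{v, u} \<in> M\<close>] t Kn_minus_sym by metis
  ultimately show ?thesis using that t(1) by blast
qed (use that assms(5) in \<open>auto simp: Kn_minus_def\<close>)

lemma Kn_minus_neighbour_exists:
  assumes "matching_in_Kn n M" "3 \<le> n" "u < n"
  obtains t where "t < n" "Kn_minus M u t"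
proof -
  define v where "v = (if u = 0 then 1 else 0 :: nat)"
  have "v < n" "u \<noteq> v" using assms(2) unfolding v_def by auto
  then show thesis
    by (rule Kn_minus_path2[OF assms]) (use that \<open>v < n\<close> in blast)+
qed

lemma matching_in_Kn_partner:
  assumes "matching_in_Kn n M" "\<forall>e\<in>M. e \<inter> R \<noteq> {}" "z \<in> \<Union>M" "z \<notin> R"
  shows "\<exists>r\<in>R. {z, r} \<in> M"
proof -
  obtain e where e: "e \<in> M" "z \<in> e" using assms(3) by blast
  moreover obtain r where r: "r \<in> e" "r \<in> R" using assms(2) e(1) by blast
  moreover obtain a b where "e = {a, b}" using matching_in_Kn_edge[OF assms(1) e(1)] by blast
  ultimately have "e = {z, r}" using assms(4) by auto
  with e r show ?thesis by blast
qed

text \<open>A vertex outside \<open>R\<close> is recognised by its non-neighbours in \<open>R\<close>: its partner if it is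
  matched (the partner then lies in \<open>R\<close>), none if it is saturated, and there is at most one
  saturated vertex outside \<open>R\<close>.\<close>

lemma fixing_set_Kn_minus:
  assumes mat: "matching_in_Kn n M" and R: "R \<subseteq> {0..<n}"
    and meets: "\<forall>e\<in>M. e \<inter> R \<noteq> {}"
    and unmatched: "\<forall>x\<in>({0..<n} - \<Union>M) - R. \<forall>y\<in>({0..<n} - \<Union>M) - R. x = y"
  shows "fixing_set {0..<n} (Kn_minus M) R"
  unfolding fixing_set_def
proof (intro conjI allI impI ballI)
  fix f x assume f: "is_aut {0..<n} (Kn_minus M) f \<and> (\<forall>r\<in>R. f r = r)" and x: "x \<in> {0..<n}"
  then have aut: "is_aut {0..<n} (Kn_minus M) f" and fixR: "\<And>r. r \<in> R \<Longrightarrow> f r = r"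
    by auto
  show "f x = x"
  proof (cases "x \<in> R")
    case False
    define y where "y = f x"
    have y: "y \<in> {0..<n}" using is_aut_in[OF aut x] unfolding y_def .
    have "y \<notin> R" using is_aut_fixing_avoids[OF aut _ R x False] fixR unfolding y_def by blast
    have same_partners: "{x, r} \<in> M \<longleftrightarrow> {y, r} \<in> M" if "r \<in> R" for r
    proof -
      have "r \<in> {0..<n}" using that R by blast
      then have "Kn_minus M x r \<longleftrightarrow> Kn_minus M y r"
        using aut x fixR[OF that] unfolding y_def is_aut_def by simp
      with that False \<open>y \<notin> R\<close> show ?thesis unfolding Kn_minus_def by auto
    qed
    note partner = matching_in_Kn_partner[OF mat meets]
    show ?thesis
    proof (cases "x \<in> \<Union>M")
      case True
      then obtain r where r: "r \<in> R" "{x, r} \<in> M" using partner[OF True False] by blast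
      then have "{y, r} \<in> M" using same_partners by blast
      then have "{x, r} = {y, r}" using matching_in_Kn_unique[OF mat r(2)] by blast
      moreover have "x \<noteq> r" using r(1) False by blast
      ultimately show ?thesis unfolding y_def by (auto simp: doubleton_eq_iff)
    next
      case x_unmatched: False
      have "y \<notin> \<Union>M"
        using partner[of y] \<open>y \<notin> R\<close> same_partners x_unmatched by blast
      then have "y \<in> ({0..<n} - \<Union>M) - R" using y \<open>y \<notin> R\<close> by blast
      moreover have "x \<in> ({0..<n} - \<Union>M) - R" using x x_unmatched False by blast
      ultimately show ?thesis using unmatched unfolding y_def by blast
    qed
  qed (rule fixR)
qed (rule R)

lemma card_vimage_Inl_Inr:
  assumes "finite S" shows "card (Inl -` S) + card (Inr -` S) = card S"
proof -
  have "S = Inl -` S <+> Inr -` S"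
  proof (intro set_eqI iffI)
    fix x assume "x \<in> S" then show "x \<in> Inl -` S <+> Inr -` S" by (cases x) auto
  qed auto
  moreover have "finite (Inl -` S)" "finite (Inr -` S)"
    using assms by (auto intro: finite_vimageI)
  ultimately show ?thesis by (metis card_Plus)
qed

lemma functigraph_E_sym:
  "(\<And>x y. E x y = E y x) \<Longrightarrow> functigraph_E E g x y = functigraph_E E g y x"
  by (cases x; cases y) auto

lemma functigraph_E_irrefl: "(\<And>x. \<not> E x x) \<Longrightarrow> \<not> functigraph_E E g x x"
  by (cases x) auto

lemma twins_functigraph_Inl:
  "twins V E a b \<Longrightarrow> g a = g b \<Longrightarrow> twins (functigraph_V V) (functigraph_E E g) (Inl a) (Inl b)"
  unfolding twins_def functigraph_V_def by auto

lemma twins_functigraph_Inr: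
  "twins V E a b \<Longrightarrow> \<forall>u\<in>V. g u \<noteq> a \<and> g u \<noteq> b \<Longrightarrow>
    twins (functigraph_V V) (functigraph_E E g) (Inr a) (Inr b)"
  unfolding twins_def functigraph_V_def by auto

section \<open>Constant functigraphs of \<open>K\<^sub>n\<close> minus a matching\<close>

locale const_functigraph =
  fixes n w :: nat and M :: "nat set set"
  assumes three_le_n: "3 \<le> n" and matching: "matching_in_Kn n M" and w_less_n: "w < n"
begin

abbreviation "V \<equiv> {0..<n}"
abbreviation "FV \<equiv> functigraph_V V"
abbreviation "FE \<equiv> functigraph_E (Kn_minus M) (\<lambda>_. w)"

lemma FE_sym: "FE x y = FE y x"
  by (rule functigraph_E_sym) (rule Kn_minus_sym)

lemma FE_irrefl: "\<not> FE x x"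
  by (rule functigraph_E_irrefl) (rule Kn_minus_irrefl)

lemma Inl_in_FV [simp]: "Inl u \<in> FV \<longleftrightarrow> u < n"
  and Inr_in_FV [simp]: "Inr u \<in> FV \<longleftrightarrow> u < n"
  unfolding functigraph_V_def by auto

lemma finite_FV: "finite FV"
  unfolding functigraph_V_def by simp

lemma card_neighbours_Inr_w: "n < card (neighbours FV FE (Inr w))"
proof -
  obtain t where "t < n" "Kn_minus M w t"
    by (rule Kn_minus_neighbour_exists[OF matching three_le_n w_less_n])
  then have "insert (Inr t) (Inl ` V) \<subseteq> neighbours FV FE (Inr w)"
    unfolding neighbours_def functigraph_V_def by auto
  moreover have "card (insert (Inr t) (Inl ` V)) = Suc n"
    by (subst card_insert_disjoint) (auto simp: card_image)
  moreover have "finite (neighbours FV FE (Inr w))"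
    using finite_FV unfolding neighbours_def by simp
  ultimately show ?thesis by (metis Suc_le_eq card_mono)
qed

lemma card_neighbours_le:
  assumes "x \<in> FV" "x \<noteq> Inr w"
  shows "card (neighbours FV FE x) \<le> n"
proof (cases x)
  case (Inl u)
  have "neighbours FV FE x \<subseteq> insert (Inr w) (Inl ` (V - {u}))"
  proof
    fix y assume "y \<in> neighbours FV FE x"
    with Inl show "y \<in> insert (Inr w) (Inl ` (V - {u}))"
      unfolding neighbours_def by (cases y) (auto simp: Kn_minus_def)
  qed
  then have "card (neighbours FV FE x) \<le> card (insert (Inr w) (Inl ` (V - {u})))"
    by (rule card_mono[rotated]) simp
  also have "\<dots> = n"
    using assms(1) Inl three_le_n by (subst card_insert_disjoint) (auto simp: card_image)
  finally show ?thesis .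
next
  case (Inr v)
  with assms have "neighbours FV FE x \<subseteq> Inr ` V"
    unfolding neighbours_def functigraph_V_def by auto
  then have "card (neighbours FV FE x) \<le> card (Inr ` V :: (nat + nat) set)"
    by (rule card_mono[rotated]) simp
  then show ?thesis by (simp add: card_image)
qed

lemma is_aut_Inr_w:
  assumes "is_aut FV FE f" shows "f (Inr w) = Inr w"
proof (rule ccontr)
  assume "f (Inr w) \<noteq> Inr w"
  moreover have "Inr w \<in> FV" using w_less_n by simp
  ultimately have "card (neighbours FV FE (f (Inr w))) \<le> n"
    using card_neighbours_le is_aut_in[OF assms] by blast
  with card_neighbours_is_aut[OF assms \<open>Inr w \<in> FV\<close>] card_neighbours_Inr_w show False
    by simp
qed

lemma is_aut_Inl_cases:
  assumes f: "is_aut FV FE f" and u: "u < n"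
  shows "f (Inl u) \<in> Inl ` V \<union> Inr ` (V - {w})"
proof -
  have "f (Inl u) \<noteq> Inr w"
  proof
    assume "f (Inl u) = Inr w"
    then have "f (Inl u) = f (Inr w)" using is_aut_Inr_w[OF f] by simp
    then show False using inj_onD[OF is_aut_inj_on[OF f]] u w_less_n by fastforce
  qed
  moreover have "f (Inl u) \<in> FV" using is_aut_in[OF f] u by simp
  ultimately show ?thesis by (cases "f (Inl u)") auto
qed

lemma is_aut_Inl_neighbour:
  assumes f: "is_aut FV FE f" and "f (Inl u) \<in> Inr ` (V - {w})"
    and "Kn_minus M u u'" "u < n" "u' < n"
  shows "f (Inl u') \<in> Inr ` (V - {w})"
proof -
  have "FE (Inl u) (Inl u')" "Inl u \<in> FV" "Inl u' \<in> FV" using assms(3-5) by simp_all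
  then have "FE (f (Inl u)) (f (Inl u'))" using f unfolding is_aut_def by blast
  with assms(2) have "f (Inl u') \<notin> Inl ` V" by auto
  with is_aut_Inl_cases[OF f assms(5)] show ?thesis by blast
qed

text \<open>By diameter 2 one vertex of the first copy landing in \<open>Inr ` (V - {w})\<close> would drag the
  whole first copy there, and it has one vertex too many.\<close>

lemma is_aut_Inl:
  assumes f: "is_aut FV FE f" and u0: "u0 < n"
  shows "f (Inl u0) \<in> Inl ` V"
proof (rule ccontr)
  let ?B = "Inr ` (V - {w}) :: (nat + nat) set"
  assume "f (Inl u0) \<notin> Inl ` V"
  with is_aut_Inl_cases[OF f u0] have start: "f (Inl u0) \<in> ?B" by blast
  have "f (Inl u) \<in> ?B" if "u < n" for u
  proof (cases "u = u0")
    case False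
    then have "u0 \<noteq> u" by simp
    show ?thesis
      by (rule Kn_minus_path2[OF matching three_le_n u0 that \<open>u0 \<noteq> u\<close>])
         (use is_aut_Inl_neighbour[OF f] start u0 that in blast)+
  qed (use start in simp)
  then have "f ` Inl ` V \<subseteq> ?B" by auto
  then have "card (f ` Inl ` V) \<le> card ?B" by (rule card_mono[rotated]) simp
  moreover have "inj_on f (Inl ` V)"
    using is_aut_inj_on[OF f] by (rule inj_on_subset) auto
  ultimately have "n \<le> n - 1" using w_less_n by (simp add: card_image)
  then show False using three_le_n by simp
qed

lemma is_aut_image_Inl:
  assumes f: "is_aut FV FE f" shows "f ` Inl ` V = Inl ` V"
proof (rule endo_inj_surj)
  show "inj_on f (Inl ` V)"
    using is_aut_inj_on[OF f] by (rule inj_on_subset) auto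
qed (use is_aut_Inl[OF f] in auto)

lemma is_aut_Inr:
  assumes f: "is_aut FV FE f" and v: "v < n"
  shows "f (Inr v) \<in> Inr ` V"
proof -
  have "f (Inr v) \<notin> f ` Inl ` V"
    using inj_onD[OF is_aut_inj_on[OF f]] v by fastforce
  moreover have "f (Inr v) \<in> FV" using is_aut_in[OF f] v by simp
  ultimately show ?thesis
    unfolding is_aut_image_Inl[OF f] by (cases "f (Inr v)") auto
qed

lemma is_aut_decompose:
  assumes f: "is_aut FV FE f"
  obtains \<phi> \<psi> where "is_aut V (Kn_minus M) \<phi>" "is_aut V (Kn_minus M) \<psi>" "\<psi> w = w"
    "\<And>u. u < n \<Longrightarrow> f (Inl u) = Inl (\<phi> u)" "\<And>u. u < n \<Longrightarrow> f (Inr u) = Inr (\<psi> u)"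
proof -
  define \<phi> where "\<phi> u = projl (f (Inl u))" for u
  define \<psi> where "\<psi> u = projr (f (Inr u))" for u
  have \<phi>: "\<phi> u < n \<and> f (Inl u) = Inl (\<phi> u)" if "u < n" for u
    using is_aut_Inl[OF f that] unfolding \<phi>_def by auto
  have \<psi>: "\<psi> u < n \<and> f (Inr u) = Inr (\<psi> u)" if "u < n" for u
    using is_aut_Inr[OF f that] unfolding \<psi>_def by auto
  have "is_aut V (Kn_minus M) \<phi>"
    by (rule is_aut_induced[OF f, where h = Inl]) (use \<phi> in auto)
  moreover have "is_aut V (Kn_minus M) \<psi>"
    by (rule is_aut_induced[OF f, where h = Inr]) (use \<psi> in auto)
  moreover have "\<psi> w = w" using is_aut_Inr_w[OF f] unfolding \<psi>_def by simp
  ultimately show thesis using that \<phi> \<psi> by blast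
qed

lemma fixing_set_functigraph:
  assumes R: "fixing_set V (Kn_minus M) R" and R': "fixing_set V (Kn_minus M) (insert w R')"
  shows "fixing_set FV FE (Inl ` R \<union> Inr ` R')"
  unfolding fixing_set_def
proof (intro conjI allI impI)
  have "R \<subseteq> V" "R' \<subseteq> V" using R R' unfolding fixing_set_def by blast+
  then show "Inl ` R \<union> Inr ` R' \<subseteq> FV" by auto
  fix f assume "is_aut FV FE f \<and> (\<forall>s\<in>Inl ` R \<union> Inr ` R'. f s = s)"
  then have f: "is_aut FV FE f" and fix_S: "\<forall>s\<in>Inl ` R \<union> Inr ` R'. f s = s" by auto
  obtain \<phi> \<psi> where \<phi>: "is_aut V (Kn_minus M) \<phi>" and \<psi>: "is_aut V (Kn_minus M) \<psi>" "\<psi> w = w"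
    and f_Inl: "\<And>u. u < n \<Longrightarrow> f (Inl u) = Inl (\<phi> u)"
    and f_Inr: "\<And>u. u < n \<Longrightarrow> f (Inr u) = Inr (\<psi> u)"
    using is_aut_decompose[OF f] by blast
  have "\<forall>r\<in>R. \<phi> r = r"
  proof
    fix r assume "r \<in> R"
    then have "Inl (\<phi> r) = Inl r" using fix_S f_Inl[of r] \<open>R \<subseteq> V\<close> by auto
    then show "\<phi> r = r" by simp
  qed
  then have \<phi>_id: "\<forall>u\<in>V. \<phi> u = u" using R \<phi> unfolding fixing_set_def by blast
  have "\<forall>r\<in>insert w R'. \<psi> r = r"
  proof
    fix r assume "r \<in> insert w R'"
    then have "r = w \<or> Inr (\<psi> r) = Inr r" using fix_S f_Inr[of r] \<open>R' \<subseteq> V\<close> by auto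
    then show "\<psi> r = r" using \<psi>(2) by auto
  qed
  then have \<psi>_id: "\<forall>u\<in>V. \<psi> u = u" using R' \<psi>(1) unfolding fixing_set_def by blast
  show "\<forall>x\<in>FV. f x = x"
  proof
    fix x assume "x \<in> FV" then show "f x = x"
      using f_Inl f_Inr \<phi>_id \<psi>_id by (cases x) auto
  qed
qed

abbreviation "Sat \<equiv> V - \<Union>M"
abbreviation "Mw \<equiv> {e \<in> M. w \<notin> e}"

lemma fixing_set_finite: "fixing_set FV FE S \<Longrightarrow> finite S"
  using finite_FV unfolding fixing_set_def by (blast intro: finite_subset)

lemma card_fixing_set_Inl_ge:
  assumes S: "fixing_set FV FE S"
  shows "card M + (card Sat - 1) \<le> card (Inl -` S)"
proof (rule card_transversal_lower_bound[OF _ matching_in_Kn_disjoint[OF matching]])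
  note twins_in_S = fixing_set_twins[OF S _ _ _ _ FE_sym FE_irrefl]
  show "finite (Inl -` S)" using fixing_set_finite[OF S] by (auto intro: finite_vimageI)
  show "\<forall>e\<in>M. e \<inter> Inl -` S \<noteq> {}"
  proof
    fix e assume "e \<in> M"
    then obtain a b where ab: "e = {a, b}" "a \<noteq> b" "a < n" "b < n"
      by (rule matching_in_Kn_edge[OF matching])
    have "Inl a \<in> S \<or> Inl b \<in> S"
      using twins_in_S twins_functigraph_Inl[OF twins_Kn_minus_matched[OF matching]] \<open>e \<in> M\<close> ab
      by simp
    with ab show "e \<inter> Inl -` S \<noteq> {}" by auto
  qed
  show "\<forall>x\<in>Sat - Inl -` S. \<forall>y\<in>Sat - Inl -` S. x = y"
  proof (intro ballI, rule ccontr)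
    fix x y assume "x \<in> Sat - Inl -` S" "y \<in> Sat - Inl -` S" "x \<noteq> y"
    then show False
      using twins_in_S[of "Inl x" "Inl y"] twins_functigraph_Inl[OF twins_Kn_minus_unmatched]
      by simp
  qed
qed auto

lemma card_fixing_set_Inr_ge:
  assumes S: "fixing_set FV FE S"
  shows "card Mw + (card (Sat - {w}) - 1) \<le> card (Inr -` S)"
proof (rule card_transversal_lower_bound)
  note twins_in_S = fixing_set_twins[OF S _ _ _ _ FE_sym FE_irrefl]
  show "finite (Inr -` S)" using fixing_set_finite[OF S] by (auto intro: finite_vimageI)
  show "pairwise disjnt Mw"
    using matching_in_Kn_disjoint[OF matching] by (auto simp: pairwise_def)
  show "\<forall>e\<in>Mw. e \<inter> Inr -` S \<noteq> {}"
  proof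
    fix e assume "e \<in> Mw"
    then have "e \<in> M" by simp
    then obtain a b where ab: "e = {a, b}" "a \<noteq> b" "a < n" "b < n"
      by (rule matching_in_Kn_edge[OF matching])
    have "Inr a \<in> S \<or> Inr b \<in> S"
      using twins_in_S twins_functigraph_Inr[OF twins_Kn_minus_matched[OF matching]] \<open>e \<in> Mw\<close> ab
      by simp
    with ab show "e \<inter> Inr -` S \<noteq> {}" by auto
  qed
  show "\<forall>x\<in>(Sat - {w}) - Inr -` S. \<forall>y\<in>(Sat - {w}) - Inr -` S. x = y"
  proof (intro ballI, rule ccontr)
    fix x y assume "x \<in> (Sat - {w}) - Inr -` S" "y \<in> (Sat - {w}) - Inr -` S" "x \<noteq> y"
    then show False
      using twins_in_S[of "Inr x" "Inr y"] twins_functigraph_Inr[OF twins_Kn_minus_unmatched]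
      by simp
  qed
qed auto

lemma card_fixing_set_ge:
  assumes "fixing_set FV FE S"
  shows "card M + (card Sat - 1) + (card Mw + (card (Sat - {w}) - 1)) \<le> card S"
  using card_fixing_set_Inl_ge[OF assms] card_fixing_set_Inr_ge[OF assms]
    card_vimage_Inl_Inr[OF fixing_set_finite[OF assms]]
  by linarith

lemma fixing_set_attaining:
  obtains S where "fixing_set FV FE S"
    "card S = card M + (card Sat - 1) + (card Mw + (card (Sat - {w}) - 1))"
proof -
  have M: "finite M" "pairwise disjnt M" "{} \<notin> M"
    using matching matching_in_Kn_finite matching_in_Kn_disjoint
    by (auto simp: matching_in_Kn_def)
  obtain R where R: "R \<subseteq> \<Union>M \<union> Sat" "card R = card M + (card Sat - 1)"
    "\<forall>e\<in>M. e \<inter> R \<noteq> {}" "\<forall>x\<in>Sat - R. \<forall>y\<in>Sat - R. x = y"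
    using transversal_exists[OF M, of Sat] by blast
  obtain R' where R': "R' \<subseteq> \<Union>Mw \<union> (Sat - {w})" "card R' = card Mw + (card (Sat - {w}) - 1)"
    "\<forall>e\<in>Mw. e \<inter> R' \<noteq> {}" "\<forall>x\<in>(Sat - {w}) - R'. \<forall>y\<in>(Sat - {w}) - R'. x = y"
  proof -
    have "finite Mw" "pairwise disjnt Mw" "{} \<notin> Mw" "(Sat - {w}) \<inter> \<Union>Mw = {}"
      using M by (auto simp: pairwise_def)
    from transversal_exists[OF this(1-3) _ this(4)] show thesis using that by blast
  qed
  have "R \<subseteq> V" "R' \<subseteq> V" using R(1) R'(1) Union_matching_in_Kn_subset[OF matching] by auto
  have "fixing_set V (Kn_minus M) R"
    by (rule fixing_set_Kn_minus[OF matching \<open>R \<subseteq> V\<close> R(3,4)])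
  moreover have "fixing_set V (Kn_minus M) (insert w R')"
  proof (rule fixing_set_Kn_minus[OF matching])
    show "insert w R' \<subseteq> V" using \<open>R' \<subseteq> V\<close> w_less_n by simp
    show "\<forall>e\<in>M. e \<inter> insert w R' \<noteq> {}" using R'(3) by blast
    show "\<forall>x\<in>Sat - insert w R'. \<forall>y\<in>Sat - insert w R'. x = y" using R'(4) by blast
  qed
  ultimately have "fixing_set FV FE (Inl ` R \<union> Inr ` R')"
    by (rule fixing_set_functigraph)
  moreover have "card (Inl ` R \<union> Inr ` R') = card R + card R'"
  proof -
    have "finite R" "finite R'" using \<open>R \<subseteq> V\<close> \<open>R' \<subseteq> V\<close> by (auto intro: finite_subset)
    then show ?thesis using card_Plus[of R R'] by (simp add: Plus_def)
  qed
  ultimately show thesis using that R(2) R'(2) by simp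
qed

lemma fix_num_const_functigraph:
  "fix_num FV FE = card M + (card Sat - 1) + (card Mw + (card (Sat - {w}) - 1))"
  unfolding fix_num_def
proof (rule Least_equality)
  show "\<exists>S. fixing_set FV FE S \<and> card S = card M + (card Sat - 1) + (card Mw + (card (Sat - {w}) - 1))"
    using fixing_set_attaining by blast
qed (use card_fixing_set_ge in blast)

end

theorem theorem3p6:
  fixes n i w :: nat and M :: "nat set set"
  assumes "n \<ge> 3"
    and "1 \<le> i" and "i \<le> n div 2"
    and "matching_in_Kn n M" and "finite M" and "card M = i"
    and "w < n"
  shows "(i \<le> n div 2 - 1 \<longrightarrow>
            fix_num (functigraph_V {0..<n}) (functigraph_E (Kn_minus M) (\<lambda>_. w))
              = 2 * n - 2 * i - 3)
       \<and> (even n \<and> i = n div 2 \<longrightarrow>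
            fix_num (functigraph_V {0..<n}) (functigraph_E (Kn_minus M) (\<lambda>_. w)) = n - 1)
       \<and> (odd n \<and> i = n div 2 \<longrightarrow>
            fix_num (functigraph_V {0..<n}) (functigraph_E (Kn_minus M) (\<lambda>_. w))
              = (if saturated {0..<n} (Kn_minus M) w then 2 * (n div 2) else 2 * (n div 2) - 1))"
proof -
  interpret const_functigraph n w M using assms by unfold_locales auto
  have sat: "saturated V (Kn_minus M) w \<longleftrightarrow> w \<notin> \<Union>M"
    by (rule saturated_Kn_minus_iff[OF matching w_less_n])
  have Sat: "card Sat = n - 2 * i" using card_unmatched[OF matching] assms(6) by simp
  have Mw: "card Mw = (if w \<in> \<Union>M then i - 1 else i)"
    using card_matching_avoiding[OF matching] assms(6) by simp
  have Sat_w: "card (Sat - {w}) = (if w \<in> \<Union>M then n - 2 * i else n - 2 * i - 1)"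
    using Sat w_less_n by (simp add: card_Diff_singleton_if)
  have "w \<notin> \<Union>M \<Longrightarrow> 0 < n - 2 * i"
    unfolding Sat[symmetric] using w_less_n by (auto simp: card_gt_0_iff)
  then show ?thesis
    unfolding fix_num_const_functigraph sat Mw Sat_w Sat assms(6)
    using assms(2,3) by (cases "even n"; auto elim!: evenE oddE)
qed

end
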